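(* Let $b\ge1$, $1\le a\le b$ and $\mu\ge1$ be integers, and $s=\tfrac{2a-1}{2}$. The smallest spin $j$ that supports a $(\mathsf{BD}_{2b},\delta_a)$-covariant spin code with $\mu$ degrees of freedom (i.e. for which the irrep $\delta_a$ occurs with multiplicity $\mu$ in the restriction of the spin-$j$ representation to $\mathsf{BD}_{2b}$) is $j=\mu b+\kappa$, where $\kappa=s-b$ if $\mu$ is odd and $\kappa=-s$ if $\mu$ is even.
   Context: Spin $j$ denotes the $(2j+1)$-dimensional irrep $D^j$ of $\mathrm{SU}(2)$. With $\mathsf{X}=\begin{pmatrix}0&-i\\-i&0\end{pmatrix}$, $\mathsf{Z}=\mathrm{diag}(-i,i)$, $\mathsf{Ph}(\alpha)=\mathrm{diag}(e^{-i\alpha/2},e^{i\alpha/2})$, the binary dihedral group is $\mathsf{BD}_{2b}=\langle\mathsf{X},\mathsf{Z},\mathsf{Ph}(\pi/b)\rangle$. For $1\le a\le b$, $\delta_a$ is the two-dimensional irreducible representation of $\mathsf{BD}_{2b}$ with $\delta_a(\mathsf{X})=\mathsf{X}$ and $\delta_a(\mathsf{Ph}(\pi/b))=\mathsf{Ph}(\pi/b)^{2a-1}$. A spin code with encoding isometry $V$ into spin $j$ is $(\mathsf{BD}_{2b},\delta_a)$-covariant if $D^j(g)V=V\delta_a(g)$ for all $g$; the number of degrees of freedom in choosing such a code is the multiplicity of $\delta_a$ in spin $j$. *)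

theory Defs
  imports "HOL-Analysis.Analysis" "HOL-Library.Function_Algebras"
begin

type_synonym m2 = "complex^2^2"

definition mk2 :: "complex \<Rightarrow> complex \<Rightarrow> complex \<Rightarrow> complex \<Rightarrow> m2" where
  "mk2 p q r t = (\<chi> i k. if i = 0 then (if k = 0 then p else q) else (if k = 0 then r else t))"

definition gX :: m2 where "gX = mk2 0 (-\<i>) (-\<i>) 0"
definition gZ :: m2 where "gZ = mk2 (-\<i>) 0 0 \<i>"
definition Ph :: "real \<Rightarrow> m2" where
  "Ph \<alpha> = mk2 (exp (- \<i> * of_real \<alpha> / 2)) 0 0 (exp (\<i> * of_real \<alpha> / 2))"

text \<open>The graph {(g, delta_a g) | g in BD_2b} of the representation delta_a, generated
  (as a monoid, which suffices since the group is finite) by the images of the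
  generators X, Z, Ph(pi/b). Note Z = Ph(pi/b)^b, so delta_a(Z) = Ph(pi/b)^(b(2a-1)) = Ph((2a-1)pi);
  likewise Ph(pi/b)^(2a-1) = Ph((2a-1)pi/b).\<close>
inductive_set BD_graph :: "nat \<Rightarrow> nat \<Rightarrow> (m2 \<times> m2) set" for b a :: nat where
  genX: "(gX, gX) \<in> BD_graph b a"
| genZ: "(gZ, Ph ((2 * real a - 1) * pi)) \<in> BD_graph b a"
| genP: "(Ph (pi / real b), Ph ((2 * real a - 1) * pi / real b)) \<in> BD_graph b a"
| mult: "(g1, h1) \<in> BD_graph b a \<Longrightarrow> (g2, h2) \<in> BD_graph b a \<Longrightarrow> (g1 ** g2, h1 ** h2) \<in> BD_graph b a"

text \<open>Spin j = n/2 representation D^j, realized on homogeneous polynomials of degree n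
  in x, y (basis x^k y^(n-k), k = 0..n), i.e. Sym^n of the defining representation.\<close>
definition Dspin :: "nat \<Rightarrow> m2 \<Rightarrow> nat \<Rightarrow> nat \<Rightarrow> complex" where
  "Dspin n g l k =
     (let \<alpha> = g $ 0 $ 0; \<beta> = g $ 0 $ 1; \<gamma> = g $ 1 $ 0; \<delta> = g $ 1 $ 1 in
      (\<Sum>p\<le>k. \<Sum>q\<le>n - k. if p + q = l then
          of_nat (k choose p) * \<alpha> ^ p * \<gamma> ^ (k - p) *
          of_nat ((n - k) choose q) * \<beta> ^ q * \<delta> ^ (n - k - q) else 0))"

definition covariant_maps :: "nat \<Rightarrow> nat \<Rightarrow> nat \<Rightarrow> (nat \<Rightarrow> 2 \<Rightarrow> complex) set" where
  "covariant_maps b a n = {V. (\<forall>i k. n < i \<longrightarrow> V i k = 0) \<and>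
     (\<forall>(g, h) \<in> BD_graph b a. \<forall>i\<le>n. \<forall>k.
        (\<Sum>l\<le>n. Dspin n g i l * V l k) = (\<Sum>m\<in>UNIV. V i m * h $ m $ k))}"

definition fscale :: "complex \<Rightarrow> (nat \<Rightarrow> 2 \<Rightarrow> complex) \<Rightarrow> (nat \<Rightarrow> 2 \<Rightarrow> complex)" where
  "fscale c V = (\<lambda>i k. c * V i k)"

text \<open>Multiplicity of delta_a in spin n/2 = complex dimension of the intertwiner space.\<close>
definition multiplicity :: "nat \<Rightarrow> nat \<Rightarrow> nat \<Rightarrow> nat" where
  "multiplicity b a n = vector_space.dim fscale (covariant_maps b a n)"

end

theory Submission
  imports Defs "HOL-Library.Real_Mod"
begin

(*
  Every element of BD_2b is Ph(k pi/b) or Ph(k pi/b) X, and delta_a maps it to the same word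
  with angle (2a-1) k pi/b.  In D^(n/2), realised on binary forms of degree n, the monomial
  x^i y^(n-i) is a Ph-eigenvector of weight n - 2i, and X swaps it with x^(n-i) y^i up to the
  phase (-i)^n.  Hence an intertwiner is determined by its first column, which may be supported
  precisely on the monomials with n - 2i = 4bq - (2a-1) for an integer q, the second column
  being the X-image of the first.  So the multiplicity of delta_a is the number of integers q
  with |4bq - (2a-1)| <= n when n is odd, and 0 when n is even.  This count grows with n and
  reaches mu exactly at n = 4b floor(mu/2) + (2a-1) for odd mu and n = 4b (mu/2) - (2a-1) for
  even mu, where the extreme label q = -floor(mu/2), resp. q = mu/2, enters.
*)

lemma exhaust_2_zero_one: "(k::2) = 0 \<or> k = 1"
proof -
  have "(2::2) = 0" by simp
  then show ?thesis using exhaust_2[of k] by metis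
qed

lemma sum_UNIV_2: "sum f (UNIV::2 set) = f 0 + f 1"
proof -
  have "(2::2) = 0" by simp
  then show ?thesis using sum_2[of f] by (metis add.commute)
qed

lemma all_2: "(\<forall>k::2. P k) \<longleftrightarrow> P 0 \<and> P 1"
  using exhaust_2_zero_one by metis

lemma mk2_nth [simp]:
  "mk2 p q r t $ 0 $ 0 = p" "mk2 p q r t $ 0 $ 1 = q"
  "mk2 p q r t $ 1 $ 0 = r" "mk2 p q r t $ 1 $ 1 = t"
  by (simp_all add: mk2_def)

lemma mk2_mult:
  "mk2 p q r t ** mk2 p' q' r' t' = mk2 (p*p' + q*r') (p*q' + q*t') (r*p' + t*r') (r*q' + t*t')"
  unfolding matrix_matrix_mult_def by (simp add: vec_eq_iff all_2 sum_UNIV_2)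

lemma cis_periodic: "cis (x + 2 * pi * of_int m) = cis x"
  by (simp add: cis_mult[symmetric])

lemma Ph_cis: "Ph x = mk2 (cis (- (x / 2))) 0 0 (cis (x / 2))"
  by (simp add: Ph_def cis_conv_exp)

lemma Ph_add: "Ph x ** Ph y = Ph (x + y)"
  by (simp add: Ph_cis mk2_mult cis_mult add_divide_distrib)

lemma Ph_periodic: "Ph (x + 4 * pi * of_int m) = Ph x"
proof -
  have "(x + 4 * pi * of_int m) / 2 = x / 2 + 2 * pi * of_int m"
    and "- ((x + 4 * pi * of_int m) / 2) = - (x / 2) + 2 * pi * of_int (- m)"
    by (simp_all add: field_simps)
  then show ?thesis by (simp only: Ph_cis cis_periodic)
qed

lemma Ph_zero: "Ph 0 = mat 1"
  using exhaust_2_zero_one by (auto simp: Ph_cis mk2_def mat_def vec_eq_iff)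

lemma gZ_eq_Ph: "gZ = Ph pi"
  by (simp add: Ph_cis gZ_def)

lemma gX_Ph: "gX ** Ph x = Ph (- x) ** gX"
  by (simp add: Ph_cis gX_def mk2_mult mult.commute)

lemma gX_gX: "gX ** gX = Ph (2 * pi)"
proof -
  have "cis (- pi) = -1" by (simp add: complex_eq_iff)
  then show ?thesis by (simp add: Ph_cis gX_def mk2_mult)
qed

lemma Ph_gX: "Ph x ** gX = mk2 0 (- \<i> * cis (- (x / 2))) (- \<i> * cis (x / 2)) 0"
  by (simp add: Ph_cis gX_def mk2_mult mult.commute)

definition dihedral :: "real \<Rightarrow> int \<Rightarrow> bool \<Rightarrow> m2" where
  "dihedral \<theta> k e = (if e then Ph (of_int k * \<theta>) ** gX else Ph (of_int k * \<theta>))"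

lemma dihedral_mult:
  assumes "gX ** gX = Ph (of_int m * \<theta>)"
  shows "dihedral \<theta> k e ** dihedral \<theta> k' e' =
    dihedral \<theta> (k + (if e then - k' else k') + (if e \<and> e' then m else 0)) (e \<noteq> e')"
proof -
  have Ph_Ph: "Ph x ** (Ph y ** C) = Ph (x + y) ** C" for x y and C :: m2
    by (simp add: matrix_mul_assoc Ph_add)
  have gX_Ph_C: "gX ** (Ph y ** C) = Ph (- y) ** (gX ** C)" for y and C :: m2
    by (simp add: matrix_mul_assoc gX_Ph)
  show ?thesis
    by (cases e; cases e')
      (simp_all add: dihedral_def matrix_mul_assoc[symmetric] Ph_Ph gX_Ph_C gX_Ph assms Ph_add
        algebra_simps)
qed

lemma BD_graph_dihedral:
  assumes "1 \<le> b" and "(g, h) \<in> BD_graph b a"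
  shows "\<exists>k e. g = dihedral (pi / b) k e \<and> h = dihedral ((2 * real a - 1) * pi / b) k e"
  using assms(2)
proof (induction rule: BD_graph.induct)
  case genX
  have "gX = dihedral \<theta> 0 True" for \<theta>
    by (simp add: dihedral_def Ph_zero)
  then show ?case by blast
next
  case genZ
  have "gZ = dihedral (pi / b) (int b) False"
    and "Ph ((2 * real a - 1) * pi) = dihedral ((2 * real a - 1) * pi / b) (int b) False"
    using assms(1) by (simp_all add: dihedral_def gZ_eq_Ph)
  then show ?case by blast
next
  case genP
  have "Ph (pi / b) = dihedral (pi / b) 1 False"
    and "Ph ((2 * real a - 1) * pi / b) = dihedral ((2 * real a - 1) * pi / b) 1 False"
    by (simp_all add: dihedral_def)
  then show ?case by blast
next
  case (mult g1 h1 g2 h2)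
  have "gX ** gX = Ph (of_int (2 * int b) * (pi / b))"
    using assms(1) by (simp add: gX_gX)
  moreover have "gX ** gX = Ph (of_int (2 * int b) * ((2 * real a - 1) * pi / b))"
  proof -
    have "of_int (2 * int b) * ((2 * real a - 1) * pi / b) = 2 * pi + 4 * pi * of_int (int a - 1)"
      using assms(1) by (simp add: field_simps)
    then show ?thesis by (simp only: gX_gX Ph_periodic)
  qed
  ultimately show ?case
    using mult.IH dihedral_mult by metis
qed

lemma Dspin_diag:
  assumes "k \<le> n"
  shows "Dspin n (mk2 \<alpha> 0 0 \<delta>) l k = (if l = k then \<alpha> ^ k * \<delta> ^ (n - k) else 0)"
proof -
  have "Dspin n (mk2 \<alpha> 0 0 \<delta>) l k = (\<Sum>p\<le>k. \<Sum>q\<le>n - k.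
      if q = 0 then (if p = k then (if l = k then \<alpha> ^ k * \<delta> ^ (n - k) else 0) else 0) else 0)"
    unfolding Dspin_def Let_def by (intro sum.cong refl) (auto simp: power_0_left)
  also have "\<dots> = (if l = k then \<alpha> ^ k * \<delta> ^ (n - k) else 0)"
    by simp
  finally show ?thesis .
qed

lemma Dspin_antidiag:
  assumes "k \<le> n"
  shows "Dspin n (mk2 0 \<beta> \<gamma> 0) l k = (if l = n - k then \<gamma> ^ k * \<beta> ^ (n - k) else 0)"
proof -
  have "Dspin n (mk2 0 \<beta> \<gamma> 0) l k = (\<Sum>p\<le>k. \<Sum>q\<le>n - k.
      if q = n - k then (if p = 0 then (if l = n - k then \<gamma> ^ k * \<beta> ^ (n - k) else 0) else 0)
      else 0)"
    unfolding Dspin_def Let_def by (intro sum.cong refl) (auto simp: power_0_left)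
  also have "\<dots> = (if l = n - k then \<gamma> ^ k * \<beta> ^ (n - k) else 0)"
    by simp
  finally show ?thesis .
qed

definition intertwines :: "nat \<Rightarrow> m2 \<Rightarrow> m2 \<Rightarrow> (nat \<Rightarrow> 2 \<Rightarrow> complex) \<Rightarrow> bool" where
  "intertwines n g h V \<longleftrightarrow>
     (\<forall>i\<le>n. \<forall>k. (\<Sum>l\<le>n. Dspin n g i l * V l k) = (\<Sum>m\<in>UNIV. V i m * h $ m $ k))"

lemma covariant_maps_iff:
  "V \<in> covariant_maps b a n \<longleftrightarrow>
     (\<forall>i k. n < i \<longrightarrow> V i k = 0) \<and> (\<forall>(g, h) \<in> BD_graph b a. intertwines n g h V)"
  unfolding covariant_maps_def intertwines_def by simp

lemma intertwines_diag_iff: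
  "intertwines n (mk2 \<alpha> 0 0 \<delta>) (mk2 \<alpha>' 0 0 \<delta>') V \<longleftrightarrow>
     (\<forall>i\<le>n. \<alpha> ^ i * \<delta> ^ (n - i) * V i 0 = \<alpha>' * V i 0 \<and>
            \<alpha> ^ i * \<delta> ^ (n - i) * V i 1 = \<delta>' * V i 1)"
proof -
  have "(\<Sum>l\<le>n. Dspin n (mk2 \<alpha> 0 0 \<delta>) i l * V l k) = \<alpha> ^ i * \<delta> ^ (n - i) * V i k"
    if "i \<le> n" for i k
  proof -
    have "(\<Sum>l\<le>n. Dspin n (mk2 \<alpha> 0 0 \<delta>) i l * V l k) =
        (\<Sum>l\<le>n. if l = i then \<alpha> ^ i * \<delta> ^ (n - i) * V i k else 0)"
      by (intro sum.cong refl) (auto simp: Dspin_diag)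
    then show ?thesis using that by simp
  qed
  then show ?thesis
    unfolding intertwines_def by (simp add: all_2 sum_UNIV_2 mult.commute)
qed

lemma intertwines_antidiag_iff:
  "intertwines n (mk2 0 \<beta> \<gamma> 0) (mk2 0 \<beta>' \<gamma>' 0) V \<longleftrightarrow>
     (\<forall>i\<le>n. \<gamma> ^ (n - i) * \<beta> ^ i * V (n - i) 0 = \<gamma>' * V i 1 \<and>
            \<gamma> ^ (n - i) * \<beta> ^ i * V (n - i) 1 = \<beta>' * V i 0)"
proof -
  have "(\<Sum>l\<le>n. Dspin n (mk2 0 \<beta> \<gamma> 0) i l * V l k) = \<gamma> ^ (n - i) * \<beta> ^ i * V (n - i) k"
    if "i \<le> n" for i k
  proof -
    have "(\<Sum>l\<le>n. Dspin n (mk2 0 \<beta> \<gamma> 0) i l * V l k) =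
        (\<Sum>l\<le>n. if l = n - i then \<gamma> ^ (n - i) * \<beta> ^ i * V (n - i) k else 0)"
      using that by (intro sum.cong refl) (auto simp: Dspin_antidiag)
    then show ?thesis by simp
  qed
  then show ?thesis
    unfolding intertwines_def by (simp add: all_2 sum_UNIV_2 mult.commute)
qed

lemma cis_half_powers:
  assumes "i \<le> n"
  shows "cis (- (x / 2)) ^ i * cis (x / 2) ^ (n - i) = cis (of_int (int n - 2 * int i) * x / 2)"
proof -
  have "cis (- (x / 2)) ^ i * cis (x / 2) ^ (n - i) =
      cis (real i * - (x / 2) + real (n - i) * (x / 2))"
    by (simp only: Complex.DeMoivre cis_mult)
  also have "\<dots> = cis (of_int (int n - 2 * int i) * x / 2)"
    using assms by (intro arg_cong[where f = cis]) (simp add: of_nat_diff field_simps)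
  finally show ?thesis .
qed

text \<open>The monomial \<open>x^i y^(n-i)\<close> has \<open>Ph\<close>-weight \<open>n - 2i\<close>; it can carry the first basis
  vector of \<open>\<delta>\<^sub>a\<close> iff this weight is \<open>-(2a-1)\<close> modulo \<open>4b\<close>.\<close>

definition admissible_index :: "nat \<Rightarrow> nat \<Rightarrow> nat \<Rightarrow> nat \<Rightarrow> bool" where
  "admissible_index b a n i \<longleftrightarrow> 4 * int b dvd int n - 2 * int i + (2 * int a - 1)"

lemma admissible_index_imp_odd: "admissible_index b a n i \<Longrightarrow> odd n"
proof -
  assume "admissible_index b a n i"
  then have "2 dvd int n - 2 * int i + (2 * int a - 1)"
    unfolding admissible_index_def by (rule dvd_trans[rotated]) simp
  then show "odd n" by presburger
qed

lemma cis_weight: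
  fixes N k :: int
  assumes "0 < b" and "4 * int b dvd N + (2 * int a - 1)"
  shows "cis (of_int N * (of_int k * (pi / b)) / 2) =
    cis (- (of_int k * ((2 * real a - 1) * pi / b) / 2))"
proof -
  obtain q where "N + (2 * int a - 1) = 4 * int b * q"
    using assms(2) by (elim dvdE)
  then have "N = 4 * int b * q - (2 * int a - 1)"
    by linarith
  then have N: "real_of_int N = 4 * real b * of_int q - (2 * real a - 1)"
    by simp
  have "of_int N * (of_int k * (pi / b)) / 2 =
      - (of_int k * ((2 * real a - 1) * pi / b) / 2) + 2 * pi * of_int (k * q)"
    unfolding N using assms(1) by (simp add: field_simps)
  then show ?thesis by (simp only: cis_periodic)
qed

lemma cis_weight_conj:
  fixes N k :: int
  assumes "0 < b" and "4 * int b dvd (2 * int a - 1) - N"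
  shows "cis (of_int N * (of_int k * (pi / b)) / 2) =
    cis (of_int k * ((2 * real a - 1) * pi / b) / 2)"
proof -
  have "cis (- (of_int N * (of_int k * (pi / b)) / 2)) =
      cis (- (of_int k * ((2 * real a - 1) * pi / b) / 2))"
    using cis_weight[of b "- N" a k] assms by (simp add: add.commute)
  then show ?thesis by (metis cis_inverse inverse_inverse_eq)
qed

lemma dvd_of_cis_weight:
  fixes N :: int
  assumes "0 < b" and "cis (of_int N * (pi / b) / 2) = cis (- ((2 * real a - 1) * pi / b / 2))"
  shows "4 * int b dvd N + (2 * int a - 1)"
proof -
  have "cis (of_int N * (pi / b) / 2 + (2 * real a - 1) * pi / b / 2) = 1"
    using assms(2) cis_divide[of "of_int N * (pi / b) / 2" "- ((2 * real a - 1) * pi / b / 2)"]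
    by simp
  then obtain m
    where "of_int N * (pi / b) / 2 + (2 * real a - 1) * pi / b / 2 = of_int m * (2 * pi)"
    by (auto simp: cis_eq_1_iff)
  then have "pi * (real_of_int N + 2 * real a - 1) = pi * (4 * real b * of_int m)"
    using assms(1) by (simp add: field_simps)
  then have "real_of_int (N + (2 * int a - 1)) = real_of_int (4 * int b * m)"
    by simp
  then show ?thesis by (simp only: of_int_eq_iff) simp
qed

text \<open>\<open>X\<close> maps \<open>x^i y^(n-i)\<close> to \<open>(-i)^n x^(n-i) y^i\<close>, so the second column of a covariant
  map is the \<open>X\<close>-image of the first, scaled by \<open>flip_coeff n\<close>.\<close>

definition flip_coeff :: "nat \<Rightarrow> complex" where
  "flip_coeff n = \<i> * (- \<i>) ^ n"

definition admissible_maps :: "nat \<Rightarrow> nat \<Rightarrow> nat \<Rightarrow> (nat \<Rightarrow> 2 \<Rightarrow> complex) set" where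
  "admissible_maps b a n = {V. (\<forall>i k. n < i \<longrightarrow> V i k = 0) \<and>
     (\<forall>i. V i 0 \<noteq> 0 \<longrightarrow> admissible_index b a n i) \<and> (\<forall>i\<le>n. V i 1 = flip_coeff n * V (n - i) 0)}"

lemma covariant_maps_subset_admissible_maps:
  assumes "1 \<le> b" and "V \<in> covariant_maps b a n"
  shows "V \<in> admissible_maps b a n"
proof -
  have supp: "\<forall>i k. n < i \<longrightarrow> V i k = 0"
    and cov: "\<And>g h. (g, h) \<in> BD_graph b a \<Longrightarrow> intertwines n g h V"
    using assms(2) unfolding covariant_maps_iff by auto
  have "admissible_index b a n i" if "V i 0 \<noteq> 0" for i
  proof -
    have "i \<le> n" using supp that by (meson not_le)
    then have "cis (- (pi / b / 2)) ^ i * cis (pi / b / 2) ^ (n - i) * V i 0 =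
        cis (- ((2 * real a - 1) * pi / b / 2)) * V i 0"
      using cov[OF BD_graph.genP] unfolding Ph_cis intertwines_diag_iff by blast
    then have "cis (of_int (int n - 2 * int i) * (pi / b) / 2) =
        cis (- ((2 * real a - 1) * pi / b / 2))"
      using that unfolding cis_half_powers[OF \<open>i \<le> n\<close>] by simp
    then show ?thesis
      using dvd_of_cis_weight assms(1) unfolding admissible_index_def by simp
  qed
  moreover have "V i 1 = flip_coeff n * V (n - i) 0" if "i \<le> n" for i
  proof -
    have "(- \<i>) ^ (n - i) * (- \<i>) ^ i * V (n - i) 0 = - \<i> * V i 1"
      using cov[OF BD_graph.genX] that by (simp add: gX_def intertwines_antidiag_iff)
    then have "(- \<i>) ^ n * V (n - i) 0 = - \<i> * V i 1"
      using that by (simp add: power_add[symmetric])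
    then show ?thesis
      unfolding flip_coeff_def by (metis i_squared minus_mult_minus mult.assoc mult_1 mult_minus1)
  qed
  ultimately show ?thesis
    unfolding admissible_maps_def using supp by blast
qed

lemma admissible_maps_phases:
  assumes "1 \<le> b" and "V \<in> admissible_maps b a n" and "i \<le> n"
  shows "cis (of_int (int n - 2 * int i) * (of_int k * (pi / b)) / 2) * V i 0 =
      cis (- (of_int k * ((2 * real a - 1) * pi / b) / 2)) * V i 0"
    and "cis (of_int (int n - 2 * int i) * (of_int k * (pi / b)) / 2) * V (n - i) 0 =
      cis (of_int k * ((2 * real a - 1) * pi / b) / 2) * V (n - i) 0"
proof -
  have adm: "admissible_index b a n j" if "V j 0 \<noteq> 0" for j
    using assms(2) that unfolding admissible_maps_def by blast
  show "cis (of_int (int n - 2 * int i) * (of_int k * (pi / b)) / 2) * V i 0 =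
      cis (- (of_int k * ((2 * real a - 1) * pi / b) / 2)) * V i 0"
  proof (cases "V i 0 = 0")
    case False
    then have "4 * int b dvd (int n - 2 * int i) + (2 * int a - 1)"
      using adm unfolding admissible_index_def by simp
    then show ?thesis
      using assms(1) cis_weight[of b "int n - 2 * int i" a k] by simp
  qed simp
  have reflect: "int n - 2 * int (n - i) + (2 * int a - 1) = (2 * int a - 1) - (int n - 2 * int i)"
    using assms(3) by (simp add: of_nat_diff)
  show "cis (of_int (int n - 2 * int i) * (of_int k * (pi / b)) / 2) * V (n - i) 0 =
      cis (of_int k * ((2 * real a - 1) * pi / b) / 2) * V (n - i) 0"
  proof (cases "V (n - i) 0 = 0")
    case False
    have "4 * int b dvd (2 * int a - 1) - (int n - 2 * int i)"
      using adm[OF False] unfolding admissible_index_def reflect .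
    then show ?thesis
      using assms(1) cis_weight_conj[of b a "int n - 2 * int i" k] by simp
  qed simp
qed

lemma admissible_maps_intertwine_rotation:
  assumes "1 \<le> b" and "V \<in> admissible_maps b a n"
  shows "intertwines n (Ph (of_int k * (pi / b))) (Ph (of_int k * ((2 * real a - 1) * pi / b))) V"
proof -
  let ?x = "of_int k * (pi / b)" and ?y = "of_int k * ((2 * real a - 1) * pi / b)"
  show ?thesis
    unfolding Ph_cis intertwines_diag_iff
  proof (intro allI impI conjI)
    fix i assume "i \<le> n"
    note phases = admissible_maps_phases[OF assms \<open>i \<le> n\<close>, of k]
    have "V i 1 = flip_coeff n * V (n - i) 0"
      using assms(2) \<open>i \<le> n\<close> unfolding admissible_maps_def by blast
    then show "cis (- (?x / 2)) ^ i * cis (?x / 2) ^ (n - i) * V i 1 = cis (?y / 2) * V i 1"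
      using phases(2) unfolding cis_half_powers[OF \<open>i \<le> n\<close>] by (simp add: mult.left_commute)
    show "cis (- (?x / 2)) ^ i * cis (?x / 2) ^ (n - i) * V i 0 = cis (- (?y / 2)) * V i 0"
      using phases(1) unfolding cis_half_powers[OF \<open>i \<le> n\<close>] .
  qed
qed

lemma admissible_maps_intertwine_reflection:
  assumes "1 \<le> b" and "V \<in> admissible_maps b a n"
  shows "intertwines n (Ph (of_int k * (pi / b)) ** gX)
    (Ph (of_int k * ((2 * real a - 1) * pi / b)) ** gX) V"
proof -
  let ?x = "of_int k * (pi / b)" and ?y = "of_int k * ((2 * real a - 1) * pi / b)"
  have flip: "V j 1 = flip_coeff n * V (n - j) 0" if "j \<le> n" for j
    using assms(2) that unfolding admissible_maps_def by blast
  show ?thesis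
    unfolding Ph_gX intertwines_antidiag_iff
  proof (intro allI impI conjI)
    fix i assume "i \<le> n"
    note phases = admissible_maps_phases[OF assms \<open>i \<le> n\<close>, of k]
    let ?c = "cis (of_int (int n - 2 * int i) * ?x / 2)"
    have powers: "(- \<i> * cis (?x / 2)) ^ (n - i) * (- \<i> * cis (- (?x / 2))) ^ i = (- \<i>) ^ n * ?c"
    proof -
      have "(- \<i> * cis (?x / 2)) ^ (n - i) * (- \<i> * cis (- (?x / 2))) ^ i =
          ((- \<i>) ^ i * (- \<i>) ^ (n - i)) * (cis (- (?x / 2)) ^ i * cis (?x / 2) ^ (n - i))"
        by (simp only: power_mult_distrib ac_simps)
      also have "\<dots> = (- \<i>) ^ n * ?c"
        using \<open>i \<le> n\<close> unfolding cis_half_powers[OF \<open>i \<le> n\<close>] by (simp flip: power_add)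
      finally show ?thesis .
    qed
    have flip_power: "(- \<i>) ^ n = - \<i> * flip_coeff n"
      unfolding flip_coeff_def by simp
    show "(- \<i> * cis (?x / 2)) ^ (n - i) * (- \<i> * cis (- (?x / 2))) ^ i * V (n - i) 0 =
        - \<i> * cis (?y / 2) * V i 1"
      unfolding powers flip[OF \<open>i \<le> n\<close>] mult.assoc phases(2) flip_power
      by (simp only: ac_simps)
    show "(- \<i> * cis (?x / 2)) ^ (n - i) * (- \<i> * cis (- (?x / 2))) ^ i * V (n - i) 1 =
        - \<i> * cis (- (?y / 2)) * V i 0"
    proof (cases "V i 0 = 0")
      case False
      then have "odd n"
        using assms(2) admissible_index_imp_odd unfolding admissible_maps_def by blast
      have "(- \<i>) ^ n * flip_coeff n = \<i> * ((- \<i>) * (- \<i>)) ^ n"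
        unfolding flip_coeff_def power_mult_distrib by (simp only: ac_simps)
      also have "\<dots> = - \<i>"
        using \<open>odd n\<close> by simp
      finally have flip_square: "(- \<i>) ^ n * flip_coeff n = - \<i>" .
      have "V (n - i) 1 = flip_coeff n * V i 0"
        using flip[of "n - i"] \<open>i \<le> n\<close> by simp
      then have "(- \<i>) ^ n * ?c * V (n - i) 1 = ((- \<i>) ^ n * flip_coeff n) * (?c * V i 0)"
        by (simp only: ac_simps)
      then have "(- \<i>) ^ n * ?c * V (n - i) 1 = - \<i> * (?c * V i 0)"
        unfolding flip_square .
      then show ?thesis
        unfolding powers phases(1) by (simp only: ac_simps)
    qed (use flip[of "n - i"] \<open>i \<le> n\<close> in simp)
  qed
qed

lemma covariant_maps_eq_admissible_maps:
  assumes "1 \<le> b"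
  shows "covariant_maps b a n = admissible_maps b a n"
proof
  show "covariant_maps b a n \<subseteq> admissible_maps b a n"
    using covariant_maps_subset_admissible_maps[OF assms] by blast
  show "admissible_maps b a n \<subseteq> covariant_maps b a n"
  proof
    fix V assume V: "V \<in> admissible_maps b a n"
    have "intertwines n g h V" if "(g, h) \<in> BD_graph b a" for g h
      using BD_graph_dihedral[OF assms that] admissible_maps_intertwine_rotation[OF assms V]
        admissible_maps_intertwine_reflection[OF assms V]
      by (auto simp: dihedral_def)
    then show "V \<in> covariant_maps b a n"
      using V unfolding covariant_maps_iff admissible_maps_def by blast
  qed
qed

interpretation maps: vector_space fscale
  by unfold_locales (simp_all add: fscale_def fun_eq_iff algebra_simps)

lemma sum_fun_apply: "(\<Sum>w\<in>A. f w) x = (\<Sum>w\<in>A. f w x)"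
  by (induction A rule: infinite_finite_induct) auto

definition admissible_indices :: "nat \<Rightarrow> nat \<Rightarrow> nat \<Rightarrow> nat set" where
  "admissible_indices b a n = {i. i \<le> n \<and> admissible_index b a n i}"

definition basis_map :: "nat \<Rightarrow> nat \<Rightarrow> nat \<Rightarrow> 2 \<Rightarrow> complex" where
  "basis_map n w = (\<lambda>i k. if k = 0 then of_bool (i = w) else flip_coeff n * of_bool (i + w = n))"

lemma basis_map_in_admissible_maps:
  "w \<in> admissible_indices b a n \<Longrightarrow> basis_map n w \<in> admissible_maps b a n"
  unfolding admissible_indices_def admissible_maps_def basis_map_def by auto

lemma basis_map_inj: "inj (basis_map n)"
proof (rule injI)
  fix v w assume "basis_map n v = basis_map n w"
  then have "basis_map n v v 0 = basis_map n w v 0" by simp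
  then show "v = w" by (simp add: basis_map_def)
qed

lemma admissible_map_expansion:
  assumes "V \<in> admissible_maps b a n"
  shows "V = (\<Sum>w\<in>admissible_indices b a n. fscale (V w 0) (basis_map n w))"
proof (intro ext)
  fix i k
  have support: "V j l = 0" if "n < j" for j l
    using assms that unfolding admissible_maps_def by blast
  have "(\<Sum>w\<in>admissible_indices b a n. V w 0 * f w) = (\<Sum>w\<le>n. V w 0 * f w)" for f
  proof (rule sum.mono_neutral_left)
    show "\<forall>w\<in>{..n} - admissible_indices b a n. V w 0 * f w = 0"
      using assms unfolding admissible_maps_def admissible_indices_def by auto
  qed (auto simp: admissible_indices_def)
  then have "(\<Sum>w\<in>admissible_indices b a n. fscale (V w 0) (basis_map n w)) i k =
      (\<Sum>w\<le>n. V w 0 * basis_map n w i k)"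
    by (simp add: sum_fun_apply fscale_def)
  also have "\<dots> = V i k"
  proof (cases "k = 0")
    case True
    then have "(\<Sum>w\<le>n. V w 0 * basis_map n w i k) = (\<Sum>w\<le>n. if w = i then V i 0 else 0)"
      by (intro sum.cong) (auto simp: basis_map_def)
    then show ?thesis
      using support[of i] True by simp
  next
    case False
    then have "k = 1" using exhaust_2_zero_one by blast
    have "(\<Sum>w\<le>n. V w 0 * basis_map n w i k) =
        (\<Sum>w\<le>n. if w = n - i then (if i \<le> n then flip_coeff n * V (n - i) 0 else 0) else 0)"
      using \<open>k = 1\<close> by (intro sum.cong) (auto simp: basis_map_def)
    also have "\<dots> = (if i \<le> n then flip_coeff n * V (n - i) 0 else 0)"
      by simp
    also have "\<dots> = V i k"
      using assms support[of i] \<open>k = 1\<close> unfolding admissible_maps_def by auto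
    finally show ?thesis .
  qed
  finally show "V i k = (\<Sum>w\<in>admissible_indices b a n. fscale (V w 0) (basis_map n w)) i k" ..
qed

lemma independent_basis_maps: "maps.independent (basis_map n ` admissible_indices b a n)"
proof (rule maps.independent_if_scalars_zero)
  show "finite (basis_map n ` admissible_indices b a n)"
    by (simp add: admissible_indices_def)
next
  fix f x
  assume sum: "(\<Sum>x\<in>basis_map n ` admissible_indices b a n. fscale (f x) x) = 0"
    and "x \<in> basis_map n ` admissible_indices b a n"
  then obtain w where w: "w \<in> admissible_indices b a n" and x: "x = basis_map n w" by blast
  have "0 = (\<Sum>v\<in>admissible_indices b a n. fscale (f (basis_map n v)) (basis_map n v)) w 0"
    using sum by (simp add: sum.reindex inj_on_subset[OF basis_map_inj])
  also have "\<dots> = (\<Sum>v\<in>admissible_indices b a n. f (basis_map n v) * basis_map n v w 0)"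
    by (simp add: sum_fun_apply fscale_def)
  also have "\<dots> = (\<Sum>v\<in>admissible_indices b a n. if v = w then f (basis_map n w) else 0)"
    by (intro sum.cong refl) (auto simp: basis_map_def)
  also have "\<dots> = f x"
    using w x by (simp add: admissible_indices_def)
  finally show "f x = 0" ..
qed

lemma dim_admissible_maps: "maps.dim (admissible_maps b a n) = card (admissible_indices b a n)"
proof -
  let ?B = "basis_map n ` admissible_indices b a n"
  have "?B \<subseteq> admissible_maps b a n"
    using basis_map_in_admissible_maps by blast
  moreover have "admissible_maps b a n \<subseteq> maps.span ?B"
  proof
    fix V assume "V \<in> admissible_maps b a n"
    then have "V = (\<Sum>w\<in>admissible_indices b a n. fscale (V w 0) (basis_map n w))"
      by (rule admissible_map_expansion)
    also have "\<dots> \<in> maps.span ?B"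
      by (intro maps.span_sum maps.span_scale maps.span_base) auto
    finally show "V \<in> maps.span ?B" .
  qed
  ultimately have "card ?B = maps.dim (admissible_maps b a n)"
    using independent_basis_maps by (rule maps.basis_card_eq_dim)
  then show ?thesis
    using card_image[OF inj_on_subset[OF basis_map_inj]] by simp
qed

text \<open>The label \<open>q\<close> of an admissible weight is given by \<open>n - 2i = 4bq - (2a-1)\<close>.\<close>

definition weight_labels :: "nat \<Rightarrow> nat \<Rightarrow> nat \<Rightarrow> int set" where
  "weight_labels b a n = {q. \<bar>4 * int b * q - (2 * int a - 1)\<bar> \<le> int n}"

lemma card_admissible_indices:
  assumes "1 \<le> b"
  shows "card (admissible_indices b a n) = (if odd n then card (weight_labels b a n) else 0)"
proof (cases "odd n")
  case False
  then have "admissible_indices b a n = {}"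
    using admissible_index_imp_odd unfolding admissible_indices_def by blast
  then show ?thesis using False by simp
next
  case True
  define label where "label i = (int n - 2 * int i + (2 * int a - 1)) div (4 * int b)" for i
  have label: "4 * int b * label i = int n - 2 * int i + (2 * int a - 1)"
    if "i \<in> admissible_indices b a n" for i
    using that unfolding admissible_indices_def admissible_index_def label_def by simp
  have "inj_on label (admissible_indices b a n)"
  proof (rule inj_onI)
    fix i j assume "i \<in> admissible_indices b a n" "j \<in> admissible_indices b a n" "label i = label j"
    then have "int n - 2 * int i + (2 * int a - 1) = int n - 2 * int j + (2 * int a - 1)"
      using label by metis
    then show "i = j" by simp
  qed
  moreover have "label ` admissible_indices b a n = weight_labels b a n"
  proof
    show "label ` admissible_indices b a n \<subseteq> weight_labels b a n"
      using label unfolding weight_labels_def admissible_indices_def by auto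
    show "weight_labels b a n \<subseteq> label ` admissible_indices b a n"
    proof
      fix q assume q: "q \<in> weight_labels b a n"
      define e where "e = int n + (2 * int a - 1) - 4 * int b * q"
      define i where "i = nat (e div 2)"
      have "even e" and "0 \<le> e"
        using True q unfolding e_def weight_labels_def by simp_all
      then have i: "int n - 2 * int i + (2 * int a - 1) = 4 * int b * q"
        unfolding i_def e_def by fastforce
      then have "i \<in> admissible_indices b a n"
        using q unfolding admissible_indices_def admissible_index_def weight_labels_def by auto
      moreover have "label i = q"
        using i assms unfolding label_def by simp
      ultimately show "q \<in> label ` admissible_indices b a n" by blast
    qed
  qed
  ultimately have "card (admissible_indices b a n) = card (weight_labels b a n)"
    using card_image by metis
  then show ?thesis
    using True by simp
qed

lemma multiplicity_eq_card_weight_labels: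
  assumes "1 \<le> b"
  shows "multiplicity b a n = (if odd n then card (weight_labels b a n) else 0)"
proof -
  have "multiplicity b a n = card (admissible_indices b a n)"
    unfolding multiplicity_def covariant_maps_eq_admissible_maps[OF assms]
    by (rule dim_admissible_maps)
  then show ?thesis
    using card_admissible_indices[OF assms] by simp
qed

lemma finite_weight_labels:
  assumes "1 \<le> b"
  shows "finite (weight_labels b a n)"
proof (rule finite_subset)
  show "weight_labels b a n \<subseteq> {- (int n + 2 * int a + 1) .. int n + 2 * int a + 1}"
  proof
    fix q assume q: "q \<in> weight_labels b a n"
    have "\<bar>q\<bar> \<le> \<bar>4 * int b * q\<bar>"
      using assms by (simp add: abs_mult mult_le_cancel_right1)
    also have "\<dots> \<le> \<bar>4 * int b * q - (2 * int a - 1)\<bar> + \<bar>2 * int a - 1\<bar>"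
      using abs_triangle_ineq[of "4 * int b * q - (2 * int a - 1)" "2 * int a - 1"] by simp
    also have "\<dots> \<le> int n + 2 * int a + 1"
      using q unfolding weight_labels_def by simp
    finally show "q \<in> {- (int n + 2 * int a + 1) .. int n + 2 * int a + 1}"
      by (simp add: abs_le_iff)
  qed
qed simp

lemma card_weight_labels_less:
  assumes "1 \<le> b" and "m < n" and "\<bar>4 * int b * q - (2 * int a - 1)\<bar> = int n"
  shows "card (weight_labels b a m) < card (weight_labels b a n)"
proof (rule psubset_card_mono)
  show "finite (weight_labels b a n)"
    using assms(1) by (rule finite_weight_labels)
  have "q \<in> weight_labels b a n - weight_labels b a m"
    using assms(2,3) unfolding weight_labels_def by auto
  moreover have "weight_labels b a m \<subseteq> weight_labels b a n"
    using assms(2) unfolding weight_labels_def by auto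
  ultimately show "weight_labels b a m \<subset> weight_labels b a n"
    by blast
qed

lemma mult_le_mult_add_iff:
  fixes d k q c :: int
  assumes "0 \<le> c" and "c < d"
  shows "d * q \<le> d * k + c \<longleftrightarrow> q \<le> k"
proof
  assume "d * q \<le> d * k + c"
  then have "d * q < d * (k + 1)"
    using assms(2) by (simp add: algebra_simps)
  then show "q \<le> k"
    using assms by (simp add: mult_less_cancel_left_pos)
next
  assume "q \<le> k"
  then have "d * q \<le> d * k"
    using assms by (intro mult_left_mono) auto
  then show "d * q \<le> d * k + c"
    using assms(1) by linarith
qed

definition least_degree :: "nat \<Rightarrow> nat \<Rightarrow> nat \<Rightarrow> nat" where
  "least_degree b a \<mu> =
     (if odd \<mu> then 4 * b * (\<mu> div 2) + (2 * a - 1) else 4 * b * (\<mu> div 2) - (2 * a - 1))"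

lemma int_least_degree:
  assumes "1 \<le> a" and "a \<le> b" and "1 \<le> \<mu>"
  shows "int (least_degree b a \<mu>) =
    4 * int b * int (\<mu> div 2) + (if odd \<mu> then 1 else - 1) * (2 * int a - 1)"
proof (cases "odd \<mu>")
  case False
  then have "1 \<le> \<mu> div 2" using assms(3) by presburger
  then have "4 * b \<le> 4 * b * (\<mu> div 2)"
    by simp
  then have "2 * a - 1 \<le> 4 * b * (\<mu> div 2)"
    using assms(2) by linarith
  then show ?thesis
    using False assms(1) by (simp add: least_degree_def of_nat_diff)
qed (use assms(1) in \<open>simp add: least_degree_def of_nat_diff\<close>)

lemma weight_labels_least_degree:
  assumes "1 \<le> a" and "a \<le> b" and "1 \<le> \<mu>"
  shows "weight_labels b a (least_degree b a \<mu>) = {- int ((\<mu> - 1) div 2) .. int (\<mu> div 2)}"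
proof -
  define d where "d = 4 * int b"
  define r where "r = 2 * int a - 1"
  define k where "k = int (\<mu> div 2)"
  have r: "0 < r" "2 * r < d"
    using assms(1,2) unfolding d_def r_def by simp_all
  have N: "int (least_degree b a \<mu>) = d * k + (if odd \<mu> then 1 else - 1) * r"
    using int_least_degree[OF assms] unfolding d_def r_def k_def .
  have "q \<in> weight_labels b a (least_degree b a \<mu>) \<longleftrightarrow> - int ((\<mu> - 1) div 2) \<le> q \<and> q \<le> k" for q
  proof (cases "odd \<mu>")
    case True
    then have "q \<in> weight_labels b a (least_degree b a \<mu>) \<longleftrightarrow>
        d * q \<le> d * k + 2 * r \<and> d * (- q) \<le> d * k + 0"
      using N unfolding weight_labels_def d_def[symmetric] r_def[symmetric]
      by (auto simp: abs_le_iff algebra_simps)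
    also have "\<dots> \<longleftrightarrow> q \<le> k \<and> - q \<le> k"
      using mult_le_mult_add_iff[of "2 * r" d q k] mult_le_mult_add_iff[of 0 d "- q" k] r by simp
    finally have "q \<in> weight_labels b a (least_degree b a \<mu>) \<longleftrightarrow> q \<le> k \<and> - q \<le> k" .
    moreover have "(\<mu> - 1) div 2 = \<mu> div 2"
      using True by presburger
    ultimately show ?thesis
      unfolding k_def by linarith
  next
    case False
    then have "q \<in> weight_labels b a (least_degree b a \<mu>) \<longleftrightarrow>
        d * q \<le> d * k + 0 \<and> d * (- q) \<le> d * (k - 1) + (d - 2 * r)"
      using N unfolding weight_labels_def d_def[symmetric] r_def[symmetric]
      by (auto simp: abs_le_iff algebra_simps)
    also have "\<dots> \<longleftrightarrow> q \<le> k \<and> - q \<le> k - 1"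
      using mult_le_mult_add_iff[of 0 d q k] mult_le_mult_add_iff[of "d - 2 * r" d "- q" "k - 1"] r
      by simp
    finally have "q \<in> weight_labels b a (least_degree b a \<mu>) \<longleftrightarrow> q \<le> k \<and> - q \<le> k - 1" .
    moreover have "(\<mu> - 1) div 2 + 1 = \<mu> div 2"
      using False assms(3) by presburger
    ultimately show ?thesis
      unfolding k_def by linarith
  qed
  then show ?thesis
    unfolding k_def by (simp add: set_eq_iff)
qed

lemma card_weight_labels_least_degree:
  assumes "1 \<le> a" and "a \<le> b" and "1 \<le> \<mu>"
  shows "card (weight_labels b a (least_degree b a \<mu>)) = \<mu>"
proof -
  have "int (\<mu> div 2) + int ((\<mu> - 1) div 2) + 1 = int \<mu>"
    using assms(3) by presburger
  then show ?thesis
    unfolding weight_labels_least_degree[OF assms] by simp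
qed

lemma least_degree_extreme_label:
  assumes "1 \<le> a" and "a \<le> b" and "1 \<le> \<mu>"
  obtains q where "\<bar>4 * int b * q - (2 * int a - 1)\<bar> = int (least_degree b a \<mu>)"
proof -
  let ?k = "int (\<mu> div 2)"
  show ?thesis
  proof (cases "odd \<mu>")
    case True
    then have "\<bar>4 * int b * (- ?k) - (2 * int a - 1)\<bar> = int (least_degree b a \<mu>)"
      using int_least_degree[OF assms] assms(1) by simp
    then show ?thesis by (rule that)
  next
    case False
    then have "\<bar>4 * int b * ?k - (2 * int a - 1)\<bar> = int (least_degree b a \<mu>)"
      using int_least_degree[OF assms] by simp
    then show ?thesis by (rule that)
  qed
qed

lemma odd_least_degree:
  assumes "1 \<le> a" and "a \<le> b" and "1 \<le> \<mu>"
  shows "odd (least_degree b a \<mu>)"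
proof -
  have "odd (int (least_degree b a \<mu>))"
    unfolding int_least_degree[OF assms] by simp
  then show ?thesis by simp
qed

lemma least_degree_half:
  assumes "1 \<le> a" and "a \<le> b" and "1 \<le> \<mu>"
  shows "real (least_degree b a \<mu>) / 2 = real \<mu> * real b +
    (if odd \<mu> then (2 * real a - 1) / 2 - real b else - ((2 * real a - 1) / 2))"
proof -
  have "real (least_degree b a \<mu>) =
      4 * real b * real (\<mu> div 2) + (if odd \<mu> then 1 else - 1) * (2 * real a - 1)"
    using arg_cong[OF int_least_degree[OF assms], of real_of_int] by simp
  moreover have "real \<mu> = 2 * real (\<mu> div 2) + (if odd \<mu> then 1 else 0)"
    by (cases "odd \<mu>") (auto elim!: oddE evenE)
  ultimately show ?thesis
    by (cases "odd \<mu>") (simp_all add: field_simps)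
qed

theorem lemma2:
  fixes b a \<mu> :: nat
  assumes "1 \<le> b" and "1 \<le> a" and "a \<le> b" and "1 \<le> \<mu>"
  defines "s \<equiv> (2 * real a - 1) / 2"
  defines "\<kappa> \<equiv> (if odd \<mu> then s - real b else - s)"
  shows "\<exists>n. real n / 2 = real \<mu> * real b + \<kappa> \<and> multiplicity b a n = \<mu> \<and>
           (\<forall>m. multiplicity b a m = \<mu> \<longrightarrow> n \<le> m)"
proof (intro exI conjI allI impI)
  let ?N = "least_degree b a \<mu>"
  have multiplicity: "multiplicity b a m = (if odd m then card (weight_labels b a m) else 0)" for m
    using multiplicity_eq_card_weight_labels assms(1) by blast
  have card: "card (weight_labels b a ?N) = \<mu>"
    using card_weight_labels_least_degree assms(2-4) by blast
  show "real ?N / 2 = real \<mu> * real b + \<kappa>"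
    unfolding \<kappa>_def s_def using least_degree_half assms(2-4) by blast
  show "multiplicity b a ?N = \<mu>"
    using multiplicity card odd_least_degree assms(2-4) by simp
  fix m assume m: "multiplicity b a m = \<mu>"
  obtain q where q: "\<bar>4 * int b * q - (2 * int a - 1)\<bar> = int ?N"
    using least_degree_extreme_label assms(2-4) by blast
  show "?N \<le> m"
  proof (rule ccontr)
    assume "\<not> ?N \<le> m"
    then have "card (weight_labels b a m) < \<mu>"
      using card_weight_labels_less[OF assms(1) _ q] card by simp
    then show False
      using m multiplicity[of m] assms(4) by (simp split: if_splits)
  qed
qed

end
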